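(* Let $p\in\mathcal{P}^d$ be perfect. Then the quadratic part $\pi_\Phi p$ of $p$ is an edge form of an L-type domain, i.e. $\pi_\Phi p\in\Phi^d$ and the L-type domain containing it is one-dimensional.
   Context: $\mathcal{P}^d$ is the set of real polynomials $f$ of degree $2$ in $x_1,\dots,x_d$ with $f(\mathbf{z})\ge0$ for all $\mathbf{z}\in\mathbb{Z}^d$; $\mathcal{V}(f)=\{\mathbf{z}\in\mathbb{Z}^d: f(\mathbf{z})=0\}$. $p\in\mathcal{P}^d$ is perfect if $\mathcal{V}(p)\neq\emptyset$ and every real polynomial of degree at most $2$ vanishing on $\mathcal{V}(p)$ is a scalar multiple of $p$. $\pi_\Phi p$ denotes the homogeneous degree-2 part of $p$. $\Phi^d$ is the cone of quadratic forms on $\mathbb{R}^d$ that are positive definite or positive semidefinite with kernel spanned by integer vectors. For $\varphi\in\Phi^d$, the Delaunay tiling $\mathrm{Del}(\varphi)$ is the tiling of $\mathbb{R}^d$ by the Delaunay polyhedra $\operatorname{conv}\mathcal{V}(f)$, $f\in\mathcal{P}^d$ with $\pi_\Phi f=\varphi$ and $\mathcal{V}(f)$ not contained in a hyperplane (for positive definite $\varphi$ these are the polytopes inscribed in ellipsoids $\varphi[\mathbf{x}-\mathbf{c}]\le R^2$ with no interior integer points; for semidefinite $\varphi$ they are cylinders over such polytopes along $\ker\varphi$). The L-type domain of a Delaunay tiling $\mathcal{D}$ is $\{\varphi\in\Phi^d:\mathrm{Del}(\varphi)=\mathcal{D}\}$; forms lying in one-dimensional L-type domains are called edge forms. *)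

theory Defs
  imports "HOL-Analysis.Analysis"
begin

text \<open>A real polynomial of degree at most 2 in d variables (d = CARD('n)) is
  represented by a triple (A, b, c) with A a symmetric matrix; it evaluates to
  x \<bullet> (A x) + b \<bullet> x + c.  The homogeneous degree-2 part is the
  quadratic form given by A.\<close>

type_synonym 'n qpoly = "(real^'n^'n) \<times> (real^'n) \<times> real"

definition qpoly_ok :: "'n::finite qpoly \<Rightarrow> bool" where
  "qpoly_ok f \<longleftrightarrow> transpose (fst f) = fst f"

definition qeval :: "'n::finite qpoly \<Rightarrow> real^'n \<Rightarrow> real" where
  "qeval f x = x \<bullet> (fst f *v x) + fst (snd f) \<bullet> x + snd (snd f)"

definition quad_part :: "'n::finite qpoly \<Rightarrow> real^'n^'n" where
  "quad_part f = fst f"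

definition int_vec :: "real^'n::finite \<Rightarrow> bool" where
  "int_vec z \<longleftrightarrow> (\<forall>i. z $ i \<in> \<int>)"

definition Pd :: "'n::finite qpoly set" where
  "Pd = {f. qpoly_ok f \<and> fst f \<noteq> 0 \<and> (\<forall>z. int_vec z \<longrightarrow> qeval f z \<ge> 0)}"

definition zeroset :: "'n::finite qpoly \<Rightarrow> (real^'n) set" where
  "zeroset f = {z. int_vec z \<and> qeval f z = 0}"

definition perfect :: "'n::finite qpoly \<Rightarrow> bool" where
  "perfect p \<longleftrightarrow> p \<in> Pd \<and> zeroset p \<noteq> {} \<and>
     (\<forall>q. qpoly_ok q \<and> (\<forall>z\<in>zeroset p. qeval q z = 0) \<longrightarrow>
          (\<exists>t::real. \<forall>x. qeval q x = t * qeval p x))"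

text \<open>Phi^d: positive semidefinite forms whose kernel is spanned by integer
  vectors (positive definite forms have kernel {0} = span {}).\<close>
definition Phi :: "(real^'n^'n::finite) set" where
  "Phi = {A. transpose A = A \<and> (\<forall>x. x \<bullet> (A *v x) \<ge> 0) \<and>
             {x. A *v x = 0} = span {z. int_vec z \<and> A *v z = 0}}"

definition in_affine_hyperplane :: "(real^'n::finite) set \<Rightarrow> bool" where
  "in_affine_hyperplane S \<longleftrightarrow> (\<exists>a \<beta>. a \<noteq> 0 \<and> S \<subseteq> {x. a \<bullet> x = \<beta>})"

definition Del :: "real^'n^'n \<Rightarrow> (real^'n::finite) set set" where
  "Del \<phi> = {convex hull (zeroset f) | f. f \<in> Pd \<and> quad_part f = \<phi> \<and>
                \<not> in_affine_hyperplane (zeroset f)}"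

definition Ltype_domain :: "(real^'n::finite) set set \<Rightarrow> (real^'n^'n) set" where
  "Ltype_domain D = {\<phi> \<in> Phi. Del \<phi> = D}"

end

theory Submission
  imports Defs
begin

(* Write A for the quadratic part of p. For an integer point z the map q |-> q(z) is linear with
   rational coefficients. Expanding the coefficients of p over Q-linearly independent reals splits
   p into rational polynomials which inherit every such rational linear condition satisfied by p,
   in particular symmetry and vanishing on V(p); by perfection each of them is a multiple of p, so
   p is a real multiple of a rational polynomial, and the kernel of A is a rational subspace,
   spanned by integer vectors. A is positive semidefinite since p(z + v) + p(z - v) = 2 v.Av for
   z in V(p). Finally conv V(p) is a Delaunay polytope of A, so every form psi in the L-type domain
   of A has a polynomial f with quadratic part psi and conv V(f) = conv V(p). Being convex, f is
   nonpositive on conv V(p), and it is nonnegative at integer points, so f vanishes on V(p); hence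
   f = t p and psi = t A. *)

lemma linear_qeval: "linear (\<lambda>f. qeval f x)"
  by (rule linearI)
    (simp_all add: qeval_def scaleR_matrix_vector_assoc[symmetric] algebra_simps)

lemma qeval_plus_minus:
  "qeval f (y + v) + qeval f (y - v) = 2 * qeval f y + 2 * (v \<bullet> (fst f *v v))"
  by (simp add: qeval_def algebra_simps)

lemma inner_axis_matrix_axis: "axis i 1 \<bullet> (C *v axis j 1) = (C::real^'n::finite^'n) $ i $ j"
  by (simp add: matrix_vector_mult_basis column_def inner_axis')

lemma symmetric_matrix_eq_zeroI:
  fixes C :: "real^'n::finite^'n"
  assumes "transpose C = C" and "\<And>x. x \<bullet> (C *v x) = 0"
  shows "C = 0"
proof -
  have "C $ i $ j = 0" for i j
  proof -
    have "C $ j $ i = C $ i $ j"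
      using assms(1) by (auto simp: transpose_def vec_eq_iff)
    moreover have "(axis i 1 + axis j 1) \<bullet> (C *v (axis i 1 + axis j 1)) = 0"
      by (rule assms(2))
    ultimately show ?thesis
      using assms(2)[of "axis i 1"] assms(2)[of "axis j 1"]
      by (simp add: algebra_simps inner_axis_matrix_axis)
  qed
  then show ?thesis by (simp add: vec_eq_iff)
qed

lemma qpoly_eqI:
  assumes "qpoly_ok f" "qpoly_ok g" "\<And>x. qeval f x = qeval g x"
  shows "f = g"
proof -
  obtain C b c where h: "f - g = (C, b, c)" by (metis prod.exhaust)
  have zero: "qeval (f - g) x = 0" for x
    using assms(3) by (simp add: linear_diff[OF linear_qeval])
  have "c = 0" using zero[of 0] by (simp add: h qeval_def)
  moreover have "C = 0"
  proof (rule symmetric_matrix_eq_zeroI)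
    show "transpose C = C"
      using assms(1,2) arg_cong[OF h, of fst]
      by (simp add: qpoly_ok_def transpose_def vec_eq_iff) (metis vector_minus_component)
    show "x \<bullet> (C *v x) = 0" for x
      using qeval_plus_minus[of "f - g" 0 x] zero[of x] zero[of "-x"] zero[of 0] by (simp add: h)
  qed
  moreover have "b = 0"
    using zero[of b] \<open>C = 0\<close> \<open>c = 0\<close> by (simp add: h qeval_def)
  ultimately show ?thesis using h by (simp flip: zero_prod_def)
qed

definition rat_coords :: "'a::euclidean_space \<Rightarrow> bool" where
  "rat_coords v \<longleftrightarrow> (\<forall>b\<in>Basis. v \<bullet> b \<in> \<rat>)"

lemma rat_coords_real [simp]: "rat_coords (r::real) \<longleftrightarrow> r \<in> \<rat>"
  by (simp add: rat_coords_def)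

lemma rat_coords_vec [simp]:
  "rat_coords (v::'a::euclidean_space^'n::finite) \<longleftrightarrow> (\<forall>i. rat_coords (v $ i))"
  by (auto simp: rat_coords_def Basis_vec_def inner_axis)

lemma rat_coords_prod [simp]: "rat_coords (a, b) \<longleftrightarrow> rat_coords a \<and> rat_coords b"
  by (auto simp: rat_coords_def Basis_prod_def inner_prod_def ball_Un)

lemma int_vec_imp_rat_coords: "int_vec z \<Longrightarrow> rat_coords z"
  using Ints_subset_Rats by (auto simp: int_vec_def)

lemma closure_rat_coords: "closure (Collect rat_coords) = (UNIV :: 'a::euclidean_space set)"
proof -
  have "(\<Union>f \<in> Basis \<rightarrow> \<rat>. {\<Sum>i::'a \<in> Basis. f i *\<^sub>R i}) \<subseteq> Collect rat_coords"
    by (auto simp: rat_coords_def inner_sum_left inner_Basis if_distrib cong: if_cong)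
  then show ?thesis
    using closure_mono closure_rational_coordinates by blast
qed

lemma nonneg_if_nonneg_on_rat_coords:
  fixes f :: "'a::euclidean_space \<Rightarrow> real"
  assumes "continuous_on UNIV f" and "\<And>v. rat_coords v \<Longrightarrow> 0 \<le> f v"
  shows "0 \<le> f x"
proof -
  have "closure (Collect rat_coords) \<subseteq> {x. 0 \<le> f x}"
    using assms by (intro closure_minimal closed_Collect_le) auto
  then show ?thesis by (simp add: closure_rat_coords subset_eq)
qed

lemma rat_coords_integer_multiple:
  fixes y :: "real^'n::finite"
  assumes "rat_coords y"
  obtains n :: real where "n \<noteq> 0" and "int_vec (n *\<^sub>R y)"
proof -
  have "\<exists>d::int. d > 0 \<and> of_int d * y $ i \<in> \<int>" for i
  proof -
    obtain a b where "b > 0" "y $ i = of_int a / of_int b"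
      using assms Rats_cases' by (metis rat_coords_real rat_coords_vec)
    then show ?thesis by (intro exI[of _ b]) simp
  qed
  then obtain d where d: "\<And>i. d i > 0" "\<And>i. of_int (d i) * y $ i \<in> \<int>"
    by metis
  have "of_int (\<Prod>j\<in>UNIV. d j) * y $ i \<in> \<int>" for i
  proof -
    have "(\<Prod>j\<in>UNIV. d j) = (\<Prod>j\<in>UNIV-{i}. d j) * d i"
      by (simp add: prod.remove mult.commute)
    then show ?thesis using d(2)[of i] by (simp add: mult.assoc Ints_prod)
  qed
  moreover have "of_int (\<Prod>j\<in>UNIV. d j) \<noteq> (0::real)"
    using d(1) by (simp add: prod_pos less_le)
  ultimately show ?thesis
    using that[of "of_int (\<Prod>j\<in>UNIV. d j)"] by (simp add: int_vec_def)
qed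

interpretation rat_real: vector_space "\<lambda>q::rat. \<lambda>x::real. of_rat q * x"
  by unfold_locales (simp_all add: algebra_simps of_rat_add of_rat_mult)

lemma rat_real_independent_sum_eq_0:
  assumes "finite B" "rat_real.independent B"
    and "\<And>r. r \<in> B \<Longrightarrow> c r \<in> \<rat>" and "(\<Sum>r\<in>B. c r * r) = 0" and "r \<in> B"
  shows "c r = 0"
proof -
  have "\<forall>r\<in>B. \<exists>q. c r = of_rat q"
    using assms(3) by (auto simp: Rats_def)
  then obtain u where u: "\<And>r. r \<in> B \<Longrightarrow> c r = of_rat (u r)"
    by metis
  have "(\<Sum>r\<in>B. of_rat (u r) * r) = 0"
    using assms(4) u by simp
  then have "u r = 0"
    using assms(1,2,5) rat_real.dependent_finite by blast
  then show ?thesis using u assms(5) by simp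
qed

lemma rational_decomposition:
  fixes x :: "'a::euclidean_space"
  obtains B and y :: "real \<Rightarrow> 'a"
  where "finite B" "rat_real.independent B" "x = (\<Sum>r\<in>B. r *\<^sub>R y r)" "\<And>r. rat_coords (y r)"
proof -
  obtain B where B: "B \<subseteq> (\<lambda>b. x \<bullet> b) ` Basis" "rat_real.independent B"
      "(\<lambda>b. x \<bullet> b) ` Basis \<subseteq> rat_real.span B"
    by (rule rat_real.maximal_independent_subset)
  have "finite B" by (rule finite_subset[OF B(1) finite_imageI[OF finite_Basis]])
  then have "\<forall>b\<in>Basis. \<exists>u. x \<bullet> b = (\<Sum>r\<in>B. of_rat (u r) * r)"
    using B(3) rat_real.span_finite by auto
  then obtain u where u: "\<And>b. b \<in> Basis \<Longrightarrow> x \<bullet> b = (\<Sum>r\<in>B. of_rat (u b r) * r)"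
    by metis
  define y where "y r = (\<Sum>b\<in>Basis. of_rat (u b r) *\<^sub>R b)" for r
  have "x = (\<Sum>b\<in>Basis. (x \<bullet> b) *\<^sub>R b)"
    by (simp add: euclidean_representation)
  also have "\<dots> = (\<Sum>b\<in>Basis. \<Sum>r\<in>B. (r * of_rat (u b r)) *\<^sub>R b)"
    using u by (simp add: scaleR_sum_left mult.commute)
  also have "\<dots> = (\<Sum>r\<in>B. r *\<^sub>R y r)"
    by (subst sum.swap) (simp add: y_def scaleR_sum_right)
  finally have "x = (\<Sum>r\<in>B. r *\<^sub>R y r)" .
  moreover have "rat_coords (y r)" for r
    by (simp add: rat_coords_def y_def inner_sum_left inner_Basis if_distrib cong: if_cong)
  ultimately show ?thesis using that \<open>finite B\<close> B(2) by blast
qed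

definition rat_linear :: "('a::euclidean_space \<Rightarrow> 'b::euclidean_space) \<Rightarrow> bool" where
  "rat_linear L \<longleftrightarrow> linear L \<and> (\<forall>v. rat_coords v \<longrightarrow> rat_coords (L v))"

lemma rat_linear_eq_0_on_components:
  assumes "finite B" "rat_real.independent B" "x = (\<Sum>r\<in>B. r *\<^sub>R y r)" "\<And>r. rat_coords (y r)"
    and "rat_linear L" "L x = 0" "r \<in> B"
  shows "L (y r) = 0"
proof (rule euclidean_eqI)
  fix b :: 'b assume b: "b \<in> Basis"
  have lin: "linear L" and rat: "\<And>v. rat_coords v \<Longrightarrow> rat_coords (L v)"
    using assms(5) by (simp_all add: rat_linear_def)
  have "(\<Sum>s\<in>B. (L (y s) \<bullet> b) * s) = L x \<bullet> b"
    unfolding assms(3) linear_sum[OF lin] linear_scale[OF lin] inner_sum_left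
    by (simp add: mult.commute)
  then have "(\<Sum>s\<in>B. (L (y s) \<bullet> b) * s) = 0"
    using assms(6) by simp
  moreover have "L (y s) \<bullet> b \<in> \<rat>" for s
    using rat[OF assms(4)] b unfolding rat_coords_def by blast
  ultimately have "L (y r) \<bullet> b = 0"
    using rat_real_independent_sum_eq_0[OF assms(1,2) _ _ assms(7), of "\<lambda>s. L (y s) \<bullet> b"]
    by blast
  then show "L (y r) \<bullet> b = 0 \<bullet> b" by simp
qed

lemma rat_linear_qeval:
  assumes "int_vec z"
  shows "rat_linear (\<lambda>q::'n::finite qpoly. qeval q z)"
  unfolding rat_linear_def
proof (intro conjI allI impI linear_qeval)
  fix q :: "'n qpoly" assume "rat_coords q"
  moreover have "z $ i \<in> \<rat>" for i
    using int_vec_imp_rat_coords[OF assms] by simp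
  ultimately show "rat_coords (qeval q z)"
    by (cases q) (simp add: qeval_def inner_vec_def matrix_vector_mult_def Rats_sum)
qed

lemma rat_linear_asymmetric_part:
  "rat_linear (\<lambda>q::'n::finite qpoly. fst q - transpose (fst q))"
  unfolding rat_linear_def
proof (intro conjI allI impI)
  show "linear (\<lambda>q::'n qpoly. fst q - transpose (fst q))"
    by (rule linearI) (simp_all add: transpose_def vec_eq_iff algebra_simps)
  show "rat_coords (fst q - transpose (fst q))" if "rat_coords q" for q :: "'n qpoly"
    using that by (cases q) (simp add: transpose_def)
qed

lemma rat_linear_matrix_vector_mult:
  fixes M :: "real^'n::finite^'m::finite"
  assumes "rat_coords M"
  shows "rat_linear ((*v) M)"
  using assms by (simp add: rat_linear_def matrix_vector_mult_def Rats_sum)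

lemma perfect_multiple:
  assumes "perfect p" "qpoly_ok q" "\<And>z. z \<in> zeroset p \<Longrightarrow> qeval q z = 0"
  shows "\<exists>t. q = t *\<^sub>R p"
proof -
  obtain t where t: "\<And>x. qeval q x = t * qeval p x"
    using assms unfolding perfect_def by blast
  have "qpoly_ok p" "qpoly_ok (t *\<^sub>R p)"
    using assms(1) by (simp_all add: perfect_def Pd_def qpoly_ok_def transpose_scalar)
  then have "q = t *\<^sub>R p"
    by (intro qpoly_eqI[OF assms(2)]) (simp_all add: t linear_cmul[OF linear_qeval])
  then show ?thesis ..
qed

lemma perfect_zeroset_not_in_hyperplane:
  assumes "perfect p"
  shows "\<not> in_affine_hyperplane (zeroset p)"
proof
  assume "in_affine_hyperplane (zeroset p)"
  then obtain a \<beta> where a: "a \<noteq> 0" "zeroset p \<subseteq> {x. a \<bullet> x = \<beta>}"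
    unfolding in_affine_hyperplane_def by blast
  have "qpoly_ok (0, a, - \<beta>)"
    by (simp add: qpoly_ok_def transpose_def vec_eq_iff)
  moreover have "qeval (0, a, - \<beta>) z = 0" if "z \<in> zeroset p" for z
    using a(2) that by (auto simp: qeval_def inner_commute)
  ultimately obtain t where t: "(0, a, - \<beta>) = t *\<^sub>R p"
    using perfect_multiple[OF assms] by blast
  have "fst p \<noteq> 0" using assms by (simp add: perfect_def Pd_def)
  then have "t = 0" using arg_cong[OF t, of fst] by simp
  then show False using arg_cong[OF t, of "fst \<circ> snd"] a(1) by simp
qed

lemma perfect_rational_multiple:
  assumes "perfect p"
  obtains s q where "s \<noteq> 0" "rat_coords q" "p = s *\<^sub>R q"
proof -
  obtain B y where B: "finite B" "rat_real.independent B" "p = (\<Sum>r\<in>B. r *\<^sub>R y r)"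
    and rat_y: "\<And>r. rat_coords (y r)"
    using rational_decomposition by blast
  note components = rat_linear_eq_0_on_components[OF B rat_y]
  have "\<exists>t. y r = t *\<^sub>R p" if "r \<in> B" for r
  proof (rule perfect_multiple[OF assms])
    have "fst p - transpose (fst p) = 0"
      using assms by (simp add: perfect_def Pd_def qpoly_ok_def)
    then have "fst (y r) - transpose (fst (y r)) = 0"
      using components[OF rat_linear_asymmetric_part] that by blast
    then show "qpoly_ok (y r)" by (simp add: qpoly_ok_def)
    show "qeval (y r) z = 0" if "z \<in> zeroset p" for z
      using that components[OF rat_linear_qeval] \<open>r \<in> B\<close> by (simp add: zeroset_def)
  qed
  then obtain t where t: "\<And>r. r \<in> B \<Longrightarrow> y r = t r *\<^sub>R p" by metis
  have "p \<noteq> 0" using assms by (auto simp: perfect_def Pd_def)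
  moreover have "p = 0" if "\<forall>r\<in>B. t r = 0"
    using B(3) t that by simp
  ultimately obtain r where r: "r \<in> B" "t r \<noteq> 0"
    by blast
  show ?thesis
  proof
    show "1 / t r \<noteq> 0" "rat_coords (y r)" using r rat_y by simp_all
    show "p = (1 / t r) *\<^sub>R y r" using r t by simp
  qed
qed

lemma psd_if_nonneg_on_int_vec:
  fixes C :: "real^'n::finite^'n"
  assumes "\<And>v. int_vec v \<Longrightarrow> 0 \<le> v \<bullet> (C *v v)"
  shows "0 \<le> x \<bullet> (C *v x)"
proof (rule nonneg_if_nonneg_on_rat_coords[where f = "\<lambda>x. x \<bullet> (C *v x)"])
  show "continuous_on UNIV (\<lambda>x. x \<bullet> (C *v x))"
    by (intro continuous_intros linear_continuous_on matrix_vector_mul_bounded_linear)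
  fix v :: "real^'n" assume "rat_coords v"
  then obtain n where n: "n \<noteq> 0" "int_vec (n *\<^sub>R v)"
    by (rule rat_coords_integer_multiple)
  have "0 \<le> (n *\<^sub>R v) \<bullet> (C *v (n *\<^sub>R v))"
    using assms n(2) .
  also have "\<dots> = n\<^sup>2 * (v \<bullet> (C *v v))"
    by (simp add: matrix_vector_mult_scaleR power2_eq_square)
  finally show "0 \<le> v \<bullet> (C *v v)"
    using n(1) by (simp add: zero_le_mult_iff)
qed

lemma Pd_quad_part_psd:
  assumes "f \<in> Pd" and "zeroset f \<noteq> {}"
  shows "0 \<le> x \<bullet> (quad_part f *v x)"
proof (rule psd_if_nonneg_on_int_vec)
  obtain z where z: "int_vec z" "qeval f z = 0"
    using assms(2) by (auto simp: zeroset_def)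
  fix v :: "real^'a" assume "int_vec v"
  then have "0 \<le> qeval f (z + v)" "0 \<le> qeval f (z - v)"
    using assms(1) z(1) by (simp_all add: Pd_def int_vec_def)
  then show "0 \<le> v \<bullet> (quad_part f *v v)"
    using qeval_plus_minus[of f z v] z(2) by (simp add: quad_part_def)
qed

lemma kernel_rat_matrix_eq_span_int:
  fixes M :: "real^'n::finite^'m::finite"
  assumes "rat_coords M"
  shows "{x. M *v x = 0} = span {z. int_vec z \<and> M *v z = 0}"
proof
  let ?S = "{z. int_vec z \<and> M *v z = 0}"
  show "span ?S \<subseteq> {x. M *v x = 0}"
    by (rule span_minimal) (auto intro: linear_subspace_kernel)
  show "{x. M *v x = 0} \<subseteq> span ?S"
  proof
    fix x assume x: "x \<in> {x. M *v x = 0}"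
    obtain B y where B: "finite B" "rat_real.independent B" "x = (\<Sum>r\<in>B. r *\<^sub>R y r)"
      and rat_y: "\<And>r. rat_coords (y r)"
      using rational_decomposition by blast
    have "y r \<in> span ?S" if "r \<in> B" for r
    proof -
      obtain n where n: "n \<noteq> 0" "int_vec (n *\<^sub>R y r)"
        using rat_coords_integer_multiple rat_y by blast
      have "M *v y r = 0"
        using rat_linear_eq_0_on_components[OF B rat_y rat_linear_matrix_vector_mult[OF assms]] x that
        by simp
      then have "n *\<^sub>R y r \<in> span ?S"
        using n(2) by (intro span_base) (simp add: matrix_vector_mult_scaleR)
      then have "inverse n *\<^sub>R (n *\<^sub>R y r) \<in> span ?S"
        by (rule span_scale)
      then show ?thesis using n(1) by simp
    qed
    then show "x \<in> span ?S"
      unfolding B(3) by (intro span_sum span_scale)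
  qed
qed

lemma perfect_quad_part_in_Phi:
  assumes "perfect p"
  shows "quad_part p \<in> Phi"
proof -
  obtain s q where q: "s \<noteq> 0" "rat_coords q" "p = s *\<^sub>R q"
    by (rule perfect_rational_multiple[OF assms])
  have "quad_part p *v x = 0 \<longleftrightarrow> fst q *v x = 0" for x
    using q(1,3) by (simp add: quad_part_def scaleR_matrix_vector_assoc[symmetric])
  then have "{x. quad_part p *v x = 0} = span {z. int_vec z \<and> quad_part p *v z = 0}"
    using kernel_rat_matrix_eq_span_int[of "fst q"] q(2) by (cases q) simp
  moreover have "transpose (quad_part p) = quad_part p"
    using assms by (simp add: perfect_def Pd_def qpoly_ok_def quad_part_def)
  moreover have "0 \<le> x \<bullet> (quad_part p *v x)" for x
    using assms by (intro Pd_quad_part_psd) (simp_all add: perfect_def)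
  ultimately show ?thesis by (simp add: Phi_def)
qed

lemma convex_on_qeval:
  fixes f :: "'n::finite qpoly"
  assumes "\<And>x. 0 \<le> x \<bullet> (fst f *v x)"
  shows "convex_on UNIV (qeval f)"
proof (rule convex_onI)
  fix t :: real and x y :: "real^'n"
  assume t: "0 < t" "t < 1"
  have "(1 - t) * qeval f x + t * qeval f y - qeval f ((1 - t) *\<^sub>R x + t *\<^sub>R y)
        = t * (1 - t) * ((x - y) \<bullet> (fst f *v (x - y)))"
    by (simp add: qeval_def algebra_simps)
  moreover have "0 \<le> t * (1 - t) * ((x - y) \<bullet> (fst f *v (x - y)))"
    using t assms[of "x - y"] by simp
  ultimately show "qeval f ((1 - t) *\<^sub>R x + t *\<^sub>R y) \<le> (1 - t) * qeval f x + t * qeval f y"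
    by linarith
qed simp

lemma int_vec_in_convex_hull_zeroset:
  assumes "f \<in> Pd" and "\<And>x. 0 \<le> x \<bullet> (quad_part f *v x)"
    and "int_vec z" and "z \<in> convex hull (zeroset f)"
  shows "z \<in> zeroset f"
proof -
  have "convex_on (convex hull (zeroset f)) (qeval f)"
    using convex_on_qeval[of f] assms(2)
    by (intro convex_on_subset[OF _ subset_UNIV convex_convex_hull]) (simp add: quad_part_def)
  then have "qeval f z \<le> 0"
    using convex_on_convex_hull_bound[of "zeroset f" "qeval f" 0] assms(4)
    by (auto simp: zeroset_def)
  moreover have "0 \<le> qeval f z"
    using assms(1,3) by (simp add: Pd_def)
  ultimately show ?thesis using assms(3) by (simp add: zeroset_def)
qed

lemma Ltype_domain_perfect_subset_span:
  assumes "perfect p"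
  shows "Ltype_domain (Del (quad_part p)) \<subseteq> span {quad_part p}"
proof
  fix \<psi> assume "\<psi> \<in> Ltype_domain (Del (quad_part p))"
  then have \<psi>: "\<psi> \<in> Phi" "Del \<psi> = Del (quad_part p)"
    by (auto simp: Ltype_domain_def)
  have "p \<in> Pd" using assms by (simp add: perfect_def)
  then have "convex hull (zeroset p) \<in> Del (quad_part p)"
    using perfect_zeroset_not_in_hyperplane[OF assms] unfolding Del_def by blast
  then have "convex hull (zeroset p) \<in> Del \<psi>"
    using \<psi>(2) by simp
  then obtain f where f: "f \<in> Pd" "quad_part f = \<psi>"
      "convex hull (zeroset f) = convex hull (zeroset p)"
    unfolding Del_def by blast
  have "qeval f z = 0" if "z \<in> zeroset p" for z
  proof -
    have "z \<in> convex hull (zeroset f)"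
      using that f(3) by (simp add: hull_inc)
    then show ?thesis
      using int_vec_in_convex_hull_zeroset[OF f(1)] \<psi>(1) f(2) that
      by (auto simp: Phi_def zeroset_def)
  qed
  moreover have "qpoly_ok f"
    using f(1) by (simp add: Pd_def)
  ultimately obtain t where "f = t *\<^sub>R p"
    using perfect_multiple[OF assms] by blast
  then have "\<psi> = t *\<^sub>R quad_part p"
    using f(2) by (simp add: quad_part_def)
  then show "\<psi> \<in> span {quad_part p}"
    by (simp add: span_base span_scale)
qed

theorem proposition1:
  fixes p :: "'n::finite qpoly"
  assumes "perfect p"
  shows "quad_part p \<in> Phi \<and> dim (Ltype_domain (Del (quad_part p))) = 1"
proof -
  let ?L = "Ltype_domain (Del (quad_part p))"
  have in_Phi: "quad_part p \<in> Phi"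
    by (rule perfect_quad_part_in_Phi[OF assms])
  then have "quad_part p \<in> ?L"
    by (simp add: Ltype_domain_def)
  then have "span ?L = span {quad_part p}"
    using Ltype_domain_perfect_subset_span[OF assms] by (simp add: span_eq span_base)
  moreover have "quad_part p \<noteq> 0"
    using assms by (simp add: perfect_def Pd_def quad_part_def)
  ultimately show ?thesis
    using in_Phi by (metis dim_span dim_singleton)
qed

end
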